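(* Under the setting in the context, fix $\kappa\in\{1,\dots,m-1\}$, $j\in\mathcal U$ and $k\in\mathcal C$, and let $t^*=T^{\mathcal U\setminus\{j\}}_{(\kappa)}$. Then, almost surely, $$\mathbb E\Big[\frac{\delta_{j,k}(t^* )}{|\hat{\mathcal S}_c(t^* )|+1}\,\mathbf 1\{T_j\le t^*,\ T_k\le t^*\}\ \Big|\ (X_i,Y_i)_{i\in\mathcal U\setminus\{j\}}\Big]=0.$$
   Context: Setting: $\hat\mu,g:\mathbb R^d\to\mathbb R$ fixed deterministic measurable functions; calibration indices $\mathcal C$ ($|\mathcal C|=n$) and disjoint test indices $\mathcal U$ ($|\mathcal U|=m\ge2$); $(X_i,Y_i)$, $i\in\mathcal C\cup\mathcal U$, i.i.d. with continuous score and residual distributions; $T_i=g(X_i)$, $R_i=|Y_i-\hat\mu(X_i)|$; $\alpha\in(0,1)$. $T^{\mathcal U\setminus\{j\}}_{(\kappa)}$ is the $\kappa$-th smallest value of $\{T_i\}_{i\in\mathcal U\setminus\{j\}}$. For $t\in\mathbb R$: $\hat{\mathcal S}_c(t)=\{i\in\mathcal C:T_i\le t\}$; $\mathcal Q(t)$ is the $\lceil(1-\alpha)(|\hat{\mathcal S}_c(t)|+1)\rceil$-th smallest value of $\{R_i: i\in\hat{\mathcal S}_c(t)\cup\{j\}\}$; and $\delta_{j,k}(t)=\mathbf 1\{R_j>\mathcal Q(t)\}-\mathbf 1\{R_k>\mathcal Q(t)\}$. *)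

theory Defs
  imports "HOL-Probability.Probability" "HOL-Library.Multiset"
begin

definition kth_smallest :: "nat \<Rightarrow> real multiset \<Rightarrow> real" where
  "kth_smallest k A = sorted_list_of_multiset A ! (k - 1)"

definition sel_cal :: "nat set \<Rightarrow> (nat \<Rightarrow> real) \<Rightarrow> real \<Rightarrow> nat set" where
  "sel_cal C T t = {i \<in> C. T i \<le> t}"

definition Qthr :: "real \<Rightarrow> nat set \<Rightarrow> nat \<Rightarrow> (nat \<Rightarrow> real) \<Rightarrow> (nat \<Rightarrow> real) \<Rightarrow> real \<Rightarrow> real" where
  "Qthr \<alpha> C j T R t =
     kth_smallest (nat \<lceil>(1 - \<alpha>) * (real (card (sel_cal C T t)) + 1)\<rceil>)
                  (image_mset R (mset_set (sel_cal C T t \<union> {j})))"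

definition delta_jk :: "real \<Rightarrow> nat set \<Rightarrow> nat \<Rightarrow> nat \<Rightarrow> (nat \<Rightarrow> real) \<Rightarrow> (nat \<Rightarrow> real) \<Rightarrow> real \<Rightarrow> real" where
  "delta_jk \<alpha> C j k T R t =
     (if R j > Qthr \<alpha> C j T R t then 1 else 0) - (if R k > Qthr \<alpha> C j T R t then 1 else 0)"

definition gen_sigma :: "'a measure \<Rightarrow> (nat \<Rightarrow> 'a \<Rightarrow> 'b::topological_space) \<Rightarrow> nat set \<Rightarrow> 'a measure" where
  "gen_sigma M Z I = sigma (space M) (\<Union>i\<in>I. {Z i -` A \<inter> space M | A. A \<in> sets borel})"

end

theory Submission
  imports Defs
begin

text \<open>Swapping the test point j with the calibration point k does not touch the conditioning
  data (X_i, Y_i), i \<in> U - {j}, hence leaves t* unchanged, and preserves the i.i.d. joint law.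
  It flips the sign of the integrand: on {T_j \<le> t*, T_k \<le> t*} both points are selected, so
  the selected set and Q(t*) stay the same while delta_{j,k} turns into delta_{k,j} = -delta_{j,k};
  off that event the integrand vanishes. So the integral of the integrand over any conditioning
  event equals its own negative.\<close>

lemma kth_smallest_le_iff:
  fixes A :: "real multiset"
  assumes "1 \<le> k" "k \<le> size A"
  shows "kth_smallest k A \<le> c \<longleftrightarrow> k \<le> size (filter_mset (\<lambda>v. v \<le> c) A)"
proof -
  define s where "s = sorted_list_of_multiset A"
  define P where "P = {i. i < length s \<and> s ! i \<le> c}"
  have sorted: "sorted s" and len: "length s = size A"
    unfolding s_def by (auto simp flip: size_mset)
  have "size (filter_mset (\<lambda>v. v \<le> c) A) = length (filter (\<lambda>v. v \<le> c) s)"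
    unfolding s_def by (metis mset_filter mset_sorted_list_of_multiset size_mset)
  also have "\<dots> = card P"
    unfolding P_def by (rule length_filter_conv_card)
  finally have size_eq: "size (filter_mset (\<lambda>v. v \<le> c) A) = card P" .
  have kth: "kth_smallest k A = s ! (k - 1)"
    unfolding kth_smallest_def s_def ..
  show ?thesis
  proof
    assume "kth_smallest k A \<le> c"
    have "{0..<k} \<subseteq> P"
    proof
      fix i assume "i \<in> {0..<k}"
      with assms len have "i \<le> k - 1" "k - 1 < length s" by auto
      with sorted \<open>kth_smallest k A \<le> c\<close> show "i \<in> P"
        unfolding kth P_def using sorted_nth_mono[of s i "k - 1"] by auto
    qed
    then show "k \<le> size (filter_mset (\<lambda>v. v \<le> c) A)"
      using card_mono[of P "{0..<k}"] unfolding size_eq P_def by auto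
  next
    assume k_le: "k \<le> size (filter_mset (\<lambda>v. v \<le> c) A)"
    show "kth_smallest k A \<le> c"
    proof (rule ccontr)
      assume "\<not> kth_smallest k A \<le> c"
      then have "P \<subseteq> {0..<k - 1}"
        using sorted_nth_mono[OF sorted, of "k - 1"] unfolding kth P_def
        by (auto simp: subset_eq) (meson not_le order_trans)
      then show False
        using card_mono[of "{0..<k - 1}" P] k_le assms unfolding size_eq by auto
    qed
  qed
qed

lemma size_filter_image_mset_mset_set:
  "finite V \<Longrightarrow> size (filter_mset P (image_mset f (mset_set V))) = card {i \<in> V. P (f i)}"
  by (simp add: filter_mset_image_mset)

lemma borel_measurable_kth_smallest:
  fixes f :: "nat \<Rightarrow> 'a \<Rightarrow> real"
  assumes "finite V" "1 \<le> k" "k \<le> card V" "\<And>i. i \<in> V \<Longrightarrow> f i \<in> borel_measurable N"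
  shows "(\<lambda>x. kth_smallest k (image_mset (\<lambda>i. f i x) (mset_set V))) \<in> borel_measurable N"
proof (subst borel_measurable_iff_le, intro allI)
  fix c
  have "kth_smallest k (image_mset (\<lambda>i. f i x) (mset_set V)) \<le> c
      \<longleftrightarrow> real k \<le> (\<Sum>i\<in>V. if f i x \<le> c then 1 else 0)" for x
    using assms by (simp add: kth_smallest_le_iff size_filter_image_mset_mset_set
        sum.If_cases Int_def)
  moreover have "{x \<in> space N. real k \<le> (\<Sum>i\<in>V. if f i x \<le> c then 1 else 0)} \<in> sets N"
    using assms(4) by measurable
  ultimately show "{x \<in> space N. kth_smallest k (image_mset (\<lambda>i. f i x) (mset_set V)) \<le> c}
      \<in> sets N"
    by simp
qed

lemma conformal_rank_bounds:
  fixes \<alpha> :: real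
  assumes "0 < \<alpha>" "\<alpha> < 1"
  shows "1 \<le> nat \<lceil>(1 - \<alpha>) * (real n + 1)\<rceil>" "nat \<lceil>(1 - \<alpha>) * (real n + 1)\<rceil> \<le> n + 1"
proof -
  have "0 < (1 - \<alpha>) * (real n + 1)" "(1 - \<alpha>) * (real n + 1) \<le> real n + 1"
    using assms by (auto simp: mult_le_cancel_right1)
  then show "1 \<le> nat \<lceil>(1 - \<alpha>) * (real n + 1)\<rceil>" "nat \<lceil>(1 - \<alpha>) * (real n + 1)\<rceil> \<le> n + 1"
    by linarith+
qed

lemma measurable_sel_cal:
  assumes "finite C" "\<And>i. i \<in> C \<Longrightarrow> T i \<in> borel_measurable N" "t \<in> borel_measurable N"
  shows "(\<lambda>x. sel_cal C (\<lambda>i. T i x) (t x)) \<in> measurable N (count_space (Pow C))"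
proof -
  have "(\<lambda>x. sel_cal C (\<lambda>i. T i x) (t x)) -` {S} \<inter> space N
      = {x \<in> space N. \<forall>i\<in>C. i \<in> S \<longleftrightarrow> T i x \<le> t x}" if "S \<in> Pow C" for S
    using that unfolding sel_cal_def by auto
  moreover have "{x \<in> space N. \<forall>i\<in>C. i \<in> S \<longleftrightarrow> T i x \<le> t x} \<in> sets N" for S
  proof (intro sets.sets_Collect_countable_All' countable_finite[OF assms(1)])
    fix i assume "i \<in> C"
    with assms have [measurable]: "T i \<in> borel_measurable N" "t \<in> borel_measurable N"
      by auto
    show "{x \<in> space N. i \<in> S \<longleftrightarrow> T i x \<le> t x} \<in> sets N"
      by measurable
  qed
  moreover have "(\<lambda>x. sel_cal C (\<lambda>i. T i x) (t x)) \<in> space N \<rightarrow> Pow C"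
    unfolding sel_cal_def by auto
  ultimately show ?thesis
    using assms(1) by (subst measurable_count_space_eq2) auto
qed

definition weighted_delta ::
    "real \<Rightarrow> nat set \<Rightarrow> nat set \<Rightarrow> nat \<Rightarrow> nat \<Rightarrow> nat \<Rightarrow> (nat \<Rightarrow> real) \<Rightarrow> (nat \<Rightarrow> real) \<Rightarrow> real" where
  "weighted_delta \<alpha> C U \<kappa> j k T R =
     (let t = kth_smallest \<kappa> (image_mset T (mset_set (U - {j})))
      in delta_jk \<alpha> C j k T R t / (real (card (sel_cal C T t)) + 1)
         * (if T j \<le> t \<and> T k \<le> t then 1 else 0))"

lemma abs_weighted_delta_le_1: "\<bar>weighted_delta \<alpha> C U \<kappa> j k T R\<bar> \<le> 1"
proof -
  have "\<bar>delta_jk \<alpha> C j k T R t / (real n + 1)\<bar> \<le> 1" for t n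
  proof -
    have "\<bar>delta_jk \<alpha> C j k T R t\<bar> \<le> 1"
      unfolding delta_jk_def by auto
    then show ?thesis
      by (simp add: divide_le_eq)
  qed
  then show ?thesis
    unfolding weighted_delta_def Let_def by (simp add: abs_mult)
qed

lemma image_mset_mset_set_cong:
  "(\<And>i. i \<in> A \<Longrightarrow> f i = g i) \<Longrightarrow> image_mset f (mset_set A) = image_mset g (mset_set A)"
  by (cases "finite A") (auto intro: image_mset_cong)

lemma weighted_delta_cong:
  assumes "\<And>i. i \<in> C \<union> U \<Longrightarrow> T' i = T i" "\<And>i. i \<in> C \<union> U \<Longrightarrow> R' i = R i"
    and "j \<in> U" "k \<in> C"
  shows "weighted_delta \<alpha> C U \<kappa> j k T' R' = weighted_delta \<alpha> C U \<kappa> j k T R"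
proof -
  have "image_mset T' (mset_set (U - {j})) = image_mset T (mset_set (U - {j}))"
    using assms by (intro image_mset_mset_set_cong) auto
  moreover have sel: "sel_cal C T' t = sel_cal C T t" for t
    using assms unfolding sel_cal_def by auto
  moreover have "image_mset R' (mset_set (sel_cal C T t \<union> {j}))
      = image_mset R (mset_set (sel_cal C T t \<union> {j}))" for t
    using assms by (intro image_mset_mset_set_cong) (auto simp: sel_cal_def)
  ultimately show ?thesis
    using assms unfolding weighted_delta_def delta_jk_def Qthr_def by auto
qed

text \<open>Exchanging the roles of the test point j and the calibration point k flips the sign:
  t* only depends on the other test points, and whenever both j and k are selected the
  selected set, hence the threshold Q(t*), is unchanged.\<close>
lemma weighted_delta_transpose:
  assumes "\<And>i. i \<in> C \<union> U \<Longrightarrow> T' i = T (Transposition.transpose j k i)"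
    and "\<And>i. i \<in> C \<union> U \<Longrightarrow> R' i = R (Transposition.transpose j k i)"
    and "j \<in> U" "k \<in> C" "C \<inter> U = {}" "finite C"
  shows "weighted_delta \<alpha> C U \<kappa> j k T' R' = - weighted_delta \<alpha> C U \<kappa> j k T R"
proof -
  let ?\<tau> = "Transposition.transpose j k"
  have j_k: "j \<noteq> k" "j \<notin> C" "k \<notin> U"
    using assms by auto
  have T'_R': "T' j = T k" "T' k = T j" "R' j = R k" "R' k = R j"
    using assms by auto
  define t where "t = kth_smallest \<kappa> (image_mset T (mset_set (U - {j})))"
  have "image_mset T' (mset_set (U - {j})) = image_mset T (mset_set (U - {j}))"
    using assms j_k by (intro image_mset_mset_set_cong) (auto simp: Transposition.transpose_def)
  then have t': "kth_smallest \<kappa> (image_mset T' (mset_set (U - {j}))) = t"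
    unfolding t_def by simp
  show ?thesis
  proof (cases "T j \<le> t \<and> T k \<le> t")
    case False
    then show ?thesis
      unfolding weighted_delta_def Let_def t' t_def[symmetric] T'_R' by auto
  next
    case True
    let ?S = "sel_cal C T t \<union> {j}"
    have sel: "sel_cal C T' t = sel_cal C T t"
      using assms True j_k unfolding sel_cal_def by (auto simp: Transposition.transpose_def split: if_splits)
    have "k \<in> ?S"
      using True assms unfolding sel_cal_def by auto
    have "image_mset R' (mset_set ?S) = image_mset (R \<circ> ?\<tau>) (mset_set ?S)"
      using assms unfolding sel_cal_def by (intro image_mset_mset_set_cong) auto
    also have "\<dots> = image_mset R (image_mset ?\<tau> (mset_set ?S))"
      by (simp add: image_mset.compositionality)
    also have "\<dots> = image_mset R (mset_set (?\<tau> ` ?S))"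
      by (simp only: image_mset_mset_set[OF inj_on_transpose])
    also have "?\<tau> ` ?S = ?S"
      using \<open>k \<in> ?S\<close> by (intro transpose_image_eq) simp
    finally have "image_mset R' (mset_set ?S) = image_mset R (mset_set ?S)" .
    then show ?thesis
      unfolding weighted_delta_def Let_def t' t_def[symmetric] delta_jk_def Qthr_def sel T'_R'
      by simp
  qed
qed

lemma borel_measurable_weighted_delta:
  fixes T R :: "nat \<Rightarrow> 'a \<Rightarrow> real"
  assumes "finite C" "finite U" "C \<inter> U = {}" "j \<in> U" "k \<in> C"
    and "1 \<le> \<kappa>" "\<kappa> \<le> card U - 1" "0 < \<alpha>" "\<alpha> < 1"
    and T: "\<And>i. i \<in> C \<union> U \<Longrightarrow> T i \<in> borel_measurable N"
    and R: "\<And>i. i \<in> C \<union> U \<Longrightarrow> R i \<in> borel_measurable N"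
  shows "(\<lambda>x. weighted_delta \<alpha> C U \<kappa> j k (\<lambda>i. T i x) (\<lambda>i. R i x)) \<in> borel_measurable N"
proof -
  define t where "t x = kth_smallest \<kappa> (image_mset (\<lambda>i. T i x) (mset_set (U - {j})))" for x
  have [measurable]: "t \<in> borel_measurable N"
    unfolding t_def using assms by (intro borel_measurable_kth_smallest) auto
  have [measurable]: "T j \<in> borel_measurable N" "T k \<in> borel_measurable N"
    "R j \<in> borel_measurable N" "R k \<in> borel_measurable N"
    using assms by auto
  define Q where "Q S x = kth_smallest (nat \<lceil>(1 - \<alpha>) * (real (card S) + 1)\<rceil>)
      (image_mset (\<lambda>i. R i x) (mset_set (S \<union> {j})))" for S x
  define G where "G S x = ((if R j x > Q S x then 1 else 0) - (if R k x > Q S x then 1 else 0))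
      / (real (card S) + 1) * (if T j x \<le> t x \<and> T k x \<le> t x then 1 else 0 :: real)" for S x
  \<comment> \<open>The selected set ranges over the finite Pow C, so it suffices to fix it.\<close>
  have G: "G S \<in> borel_measurable N" if "S \<in> Pow C" for S
  proof -
    have "finite S" "j \<notin> S"
      using that assms by (auto intro: finite_subset)
    then have "card (S \<union> {j}) = card S + 1"
      by simp
    then have [measurable]: "Q S \<in> borel_measurable N"
      unfolding Q_def using that assms conformal_rank_bounds[of \<alpha> "card S"]
      by (intro borel_measurable_kth_smallest) auto
    show ?thesis
      unfolding G_def by measurable
  qed
  have sel: "(\<lambda>x. sel_cal C (\<lambda>i. T i x) (t x)) \<in> measurable N (count_space (Pow C))"
    using assms by (intro measurable_sel_cal) auto
  have "(\<lambda>x. G (sel_cal C (\<lambda>i. T i x) (t x)) x) \<in> borel_measurable N"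
    using measurable_compose_countable'[OF G sel] assms(1) by (simp add: countable_finite)
  then show ?thesis
    unfolding weighted_delta_def delta_jk_def Qthr_def Let_def G_def Q_def t_def by simp
qed

lemma borel_measurable_weighted_delta_residuals:
  fixes g muhat :: "'x::second_countable_topology \<Rightarrow> real"
  assumes "g \<in> borel_measurable borel" "muhat \<in> borel_measurable borel"
    and "finite C" "finite U" "C \<inter> U = {}" "j \<in> U" "k \<in> C"
    and "1 \<le> \<kappa>" "\<kappa> \<le> card U - 1" "0 < \<alpha>" "\<alpha> < 1"
  shows "(\<lambda>x. weighted_delta \<alpha> C U \<kappa> j k (\<lambda>i. g (fst (x i)))
      (\<lambda>i. \<bar>snd (x i) - muhat (fst (x i))\<bar>)) \<in> borel_measurable (\<Pi>\<^sub>M i\<in>C \<union> U. borel)"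
proof (rule borel_measurable_weighted_delta)
  let ?PB = "\<Pi>\<^sub>M i\<in>C \<union> U. (borel :: ('x \<times> real) measure)"
  fix i assume "i \<in> C \<union> U"
  then have coord: "(\<lambda>x. x i) \<in> measurable ?PB (borel \<Otimes>\<^sub>M borel)"
    unfolding borel_prod by (rule measurable_component_singleton)
  have fst: "(\<lambda>x. fst (x i)) \<in> borel_measurable ?PB"
    by (rule measurable_compose[OF coord measurable_fst])
  have snd: "(\<lambda>x. snd (x i)) \<in> borel_measurable ?PB"
    by (rule measurable_compose[OF coord measurable_snd])
  show "(\<lambda>x. g (fst (x i))) \<in> borel_measurable ?PB"
    using fst assms(1) by (rule measurable_compose)
  show "(\<lambda>x. \<bar>snd (x i) - muhat (fst (x i))\<bar>) \<in> borel_measurable ?PB"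
    using snd measurable_compose[OF fst assms(2)] by measurable
qed (use assms in auto)

lemma integral_eq_0_if_antisymmetric:
  fixes G :: "'a \<Rightarrow> real"
  assumes \<sigma>: "\<sigma> \<in> measurable P P" "distr P P \<sigma> = P"
    and G: "G \<in> borel_measurable P" "\<And>x. x \<in> space P \<Longrightarrow> G (\<sigma> x) = - G x"
  shows "integral\<^sup>L P G = 0"
proof -
  have "integral\<^sup>L P G = integral\<^sup>L (distr P P \<sigma>) G"
    by (simp add: \<sigma>)
  also have "\<dots> = (\<integral>x. G (\<sigma> x) \<partial>P)"
    by (rule integral_distr[OF \<sigma>(1) G(1)])
  also have "\<dots> = (\<integral>x. - G x \<partial>P)"
    by (rule Bochner_Integration.integral_cong) (simp_all add: G(2))
  finally show ?thesis
    by simp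
qed

lemma space_gen_sigma [simp]: "space (gen_sigma M Z V) = space M"
  unfolding gen_sigma_def by (rule space_measure_of) auto

lemma sets_gen_sigma: "sets (gen_sigma M Z V) = sigma_sets (space M)
    (\<Union>i\<in>V. {Z i -` A \<inter> space M | A. A \<in> sets borel})"
  unfolding gen_sigma_def by (rule sets_measure_of) auto

lemma subalgebra_gen_sigma:
  assumes "\<And>i. i \<in> V \<Longrightarrow> Z i \<in> borel_measurable M"
  shows "subalgebra M (gen_sigma M Z V)"
  unfolding subalgebra_def sets_gen_sigma
  using assms by (auto intro!: sets.sigma_sets_subset)

lemma sets_gen_sigma_subset_vimage_algebra:
  "sets (gen_sigma M Z V)
    \<subseteq> sets (vimage_algebra (space M) (\<lambda>\<omega>. \<lambda>i\<in>V. Z i \<omega>) (\<Pi>\<^sub>M i\<in>V. borel))"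
  unfolding sets_gen_sigma
proof (intro sigma_algebra.sigma_sets_subset[of "space M", simplified] subsetI)
  show "sigma_algebra (space M)
      (sets (vimage_algebra (space M) (\<lambda>\<omega>. \<lambda>i\<in>V. Z i \<omega>) (\<Pi>\<^sub>M i\<in>V. borel)))"
    by (metis sets.sigma_algebra_axioms space_vimage_algebra)
next
  fix E assume "E \<in> (\<Union>i\<in>V. {Z i -` A \<inter> space M | A. A \<in> sets borel})"
  then obtain i A where "i \<in> V" "A \<in> sets borel" and E: "E = Z i -` A \<inter> space M"
    by auto
  then have S: "{x \<in> space (\<Pi>\<^sub>M i\<in>V. borel). x i \<in> A} \<in> sets (\<Pi>\<^sub>M i\<in>V. borel)"
    by measurable
  have E': "E = (\<lambda>\<omega>. \<lambda>i\<in>V. Z i \<omega>) -` {x \<in> space (\<Pi>\<^sub>M i\<in>V. borel). x i \<in> A} \<inter> space M"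
    using \<open>i \<in> V\<close> unfolding E by (auto simp: space_PiM)
  show "E \<in> sets (vimage_algebra (space M) (\<lambda>\<omega>. \<lambda>i\<in>V. Z i \<omega>) (\<Pi>\<^sub>M i\<in>V. borel))"
    unfolding E' by (rule in_vimage_algebra[OF S])
qed

lemma gen_sigma_eventE:
  assumes "A \<in> sets (gen_sigma M Z V)"
  obtains B where "B \<in> sets (\<Pi>\<^sub>M i\<in>V. borel)" "A = (\<lambda>\<omega>. \<lambda>i\<in>V. Z i \<omega>) -` B \<inter> space M"
proof -
  have "(\<lambda>\<omega>. \<lambda>i\<in>V. Z i \<omega>) \<in> space M \<rightarrow> space (\<Pi>\<^sub>M i\<in>V. borel)"
    by (auto simp: space_PiM)
  moreover have "A \<in> sets (vimage_algebra (space M) (\<lambda>\<omega>. \<lambda>i\<in>V. Z i \<omega>) (\<Pi>\<^sub>M i\<in>V. borel))"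
    using sets_gen_sigma_subset_vimage_algebra assms by blast
  ultimately obtain B where "B \<in> sets (\<Pi>\<^sub>M i\<in>V. borel)"
      "A = (\<lambda>\<omega>. \<lambda>i\<in>V. Z i \<omega>) -` B \<inter> space M"
    by (auto simp: sets_vimage_algebra2)
  then show ?thesis
    by (rule that)
qed

lemma distr_PiM_permute:
  assumes "prob_space N" "bij_betw \<tau> I I"
  shows "(\<lambda>x. \<lambda>i\<in>I. x (\<tau> i)) \<in> measurable (\<Pi>\<^sub>M i\<in>I. N) (\<Pi>\<^sub>M i\<in>I. N)"
    and "distr (\<Pi>\<^sub>M i\<in>I. N) (\<Pi>\<^sub>M i\<in>I. N) (\<lambda>x. \<lambda>i\<in>I. x (\<tau> i)) = (\<Pi>\<^sub>M i\<in>I. N)"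
proof -
  show "(\<lambda>x. \<lambda>i\<in>I. x (\<tau> i)) \<in> measurable (\<Pi>\<^sub>M i\<in>I. N) (\<Pi>\<^sub>M i\<in>I. N)"
    using assms(2) by (intro measurable_restrict measurable_component_singleton)
      (auto simp: bij_betw_def)
  show "distr (\<Pi>\<^sub>M i\<in>I. N) (\<Pi>\<^sub>M i\<in>I. N) (\<lambda>x. \<lambda>i\<in>I. x (\<tau> i)) = (\<Pi>\<^sub>M i\<in>I. N)"
    using distr_PiM_reindex[of I "\<lambda>_. N" \<tau> I] assms by (auto simp: bij_betw_def)
qed

lemma (in prob_space) distr_iid_eq_PiM:
  fixes Z :: "'i \<Rightarrow> 'a \<Rightarrow> 'b::topological_space"
  assumes "i\<^sub>0 \<in> I" "\<And>i. i \<in> I \<Longrightarrow> Z i \<in> borel_measurable M"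
    and "indep_vars (\<lambda>_. borel) Z I"
    and "\<And>i. i \<in> I \<Longrightarrow> distr M borel (Z i) = distr M borel (Z i\<^sub>0)"
  shows "distr M (\<Pi>\<^sub>M i\<in>I. borel) (\<lambda>\<omega>. \<lambda>i\<in>I. Z i \<omega>) = (\<Pi>\<^sub>M i\<in>I. distr M borel (Z i\<^sub>0))"
proof -
  have "distr M (\<Pi>\<^sub>M i\<in>I. borel) (\<lambda>\<omega>. \<lambda>i\<in>I. Z i \<omega>) = (\<Pi>\<^sub>M i\<in>I. distr M borel (Z i))"
    using assms by (subst indep_vars_iff_distr_eq_PiM'[symmetric]) auto
  also have "\<dots> = (\<Pi>\<^sub>M i\<in>I. distr M borel (Z i\<^sub>0))"
    using assms(4) by (rule PiM_cong[OF refl])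
  finally show ?thesis .
qed

text \<open>Relabelling i.i.d. coordinates by a permutation fixing the conditioning indices V preserves
  the joint law and every conditioning event, so an integrand that changes sign under the
  relabelling integrates to 0 over each such event.\<close>
lemma (in prob_space) AE_real_cond_exp_eq_0_if_antisymmetric:
  fixes Z :: "nat \<Rightarrow> 'a \<Rightarrow> 'b::topological_space" and h :: "(nat \<Rightarrow> 'b) \<Rightarrow> real"
  assumes V: "V \<subseteq> I" and i\<^sub>0: "i\<^sub>0 \<in> I"
    and Z: "\<And>i. i \<in> I \<Longrightarrow> Z i \<in> borel_measurable M"
    and indep: "indep_vars (\<lambda>_. borel) Z I"
    and ident: "\<And>i. i \<in> I \<Longrightarrow> distr M borel (Z i) = distr M borel (Z i\<^sub>0)"
    and \<tau>: "bij_betw \<tau> I I" "\<And>i. i \<in> V \<Longrightarrow> \<tau> i = i"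
    and h: "h \<in> borel_measurable (\<Pi>\<^sub>M i\<in>I. borel)" "\<And>x. \<bar>h x\<bar> \<le> c"
    and h_odd: "\<And>x. x \<in> space (\<Pi>\<^sub>M i\<in>I. borel) \<Longrightarrow> h (\<lambda>i\<in>I. x (\<tau> i)) = - h x"
  shows "AE \<omega> in M. real_cond_exp M (gen_sigma M Z V) (\<lambda>\<omega>. h (\<lambda>i\<in>I. Z i \<omega>)) \<omega> = 0"
proof -
  define PB where "PB = (\<Pi>\<^sub>M i\<in>I. (borel :: 'b measure))"
  define P where "P = (\<Pi>\<^sub>M i\<in>I. distr M borel (Z i\<^sub>0))"
  define Zv where "Zv \<omega> = (\<lambda>i\<in>I. Z i \<omega>)" for \<omega>
  define \<sigma> where "\<sigma> x = (\<lambda>i\<in>I. x (\<tau> i))" for x :: "nat \<Rightarrow> 'b"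
  have sets_P: "sets P = sets PB"
    unfolding P_def PB_def by (rule sets_PiM_cong) auto
  have Zv: "Zv \<in> measurable M PB"
    unfolding Zv_def PB_def using Z by (rule measurable_restrict)
  have law: "distr M PB Zv = P"
    unfolding PB_def Zv_def P_def using i\<^sub>0 Z indep ident by (rule distr_iid_eq_PiM)
  have "prob_space (distr M borel (Z i\<^sub>0))"
    using i\<^sub>0 Z by (intro prob_space_distr) auto
  then have \<sigma>: "\<sigma> \<in> measurable P P" "distr P P \<sigma> = P"
    unfolding P_def \<sigma>_def using \<tau>(1) by (rule distr_PiM_permute)+
  interpret F: finite_measure_subalgebra M "gen_sigma M Z V"
    using subalgebra_gen_sigma[of V Z M] V Z finite_measure_axioms
    by unfold_locales (auto simp: subalgebra_def)
  have "(\<integral>\<omega>\<in>A. h (Zv \<omega>) \<partial>M) = 0" if A_in: "A \<in> sets (gen_sigma M Z V)" for A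
  proof -
    obtain B where B: "B \<in> sets (\<Pi>\<^sub>M i\<in>V. borel)"
      and A: "A = (\<lambda>\<omega>. \<lambda>i\<in>V. Z i \<omega>) -` B \<inter> space M"
      using A_in by (rule gen_sigma_eventE)
    define G where "G x = indicator {x \<in> space PB. restrict x V \<in> B} x * h x" for x
    have G: "G \<in> borel_measurable PB"
      unfolding G_def PB_def using B h(1) measurable_restrict_subset[OF V] by measurable
    have "(\<integral>\<omega>\<in>A. h (Zv \<omega>) \<partial>M) = (\<integral>\<omega>. G (Zv \<omega>) \<partial>M)"
      unfolding set_lebesgue_integral_def G_def A
      using measurable_space[OF Zv] Int_absorb1[OF V]
      by (intro Bochner_Integration.integral_cong) (auto simp: Zv_def indicator_def)
    also have "\<dots> = integral\<^sup>L P G"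
      using integral_distr[OF Zv G] law by simp
    also have "\<dots> = 0"
    proof (rule integral_eq_0_if_antisymmetric[OF \<sigma>])
      show "G \<in> borel_measurable P"
        using G by (simp add: measurable_cong_sets[OF sets_P])
      fix x assume "x \<in> space P"
      then have "x \<in> space PB" "\<sigma> x \<in> space PB"
        using sets_eq_imp_space_eq[OF sets_P] measurable_space[OF \<sigma>(1)] by auto
      moreover have "restrict (\<sigma> x) V = restrict x V"
        using V \<tau>(2) by (auto simp: \<sigma>_def fun_eq_iff)
      ultimately show "G (\<sigma> x) = - G x"
        using h_odd unfolding G_def \<sigma>_def PB_def by (simp add: indicator_def)
    qed
    finally show ?thesis .
  qed
  moreover have "integrable M (\<lambda>\<omega>. h (Zv \<omega>))"
    using h measurable_compose[OF Zv] unfolding PB_def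
    by (intro integrable_const_bound[of _ c]) auto
  ultimately have "AE \<omega> in M. real_cond_exp M (gen_sigma M Z V) (\<lambda>\<omega>. h (Zv \<omega>)) \<omega> = 0"
    by (intro F.real_cond_exp_charact) auto
  then show ?thesis
    unfolding Zv_def .
qed

theorem lemma10:
  fixes M :: "'w measure"
    and X :: "nat \<Rightarrow> 'w \<Rightarrow> 'x::euclidean_space"
    and Y :: "nat \<Rightarrow> 'w \<Rightarrow> real"
    and muhat g :: "'x \<Rightarrow> real"
    and C U :: "nat set" and \<alpha> :: real and \<kappa> j k :: nat
  assumes "prob_space M"
    and "muhat \<in> borel_measurable borel" and "g \<in> borel_measurable borel"
    and "finite C" and "finite U" and "C \<inter> U = {}" and "card U \<ge> 2"
    and "\<And>i. i \<in> C \<union> U \<Longrightarrow> X i \<in> borel_measurable M"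
    and "\<And>i. i \<in> C \<union> U \<Longrightarrow> Y i \<in> borel_measurable M"
    and "prob_space.indep_vars M (\<lambda>_. borel) (\<lambda>i \<omega>. (X i \<omega>, Y i \<omega>)) (C \<union> U)"
    and "\<And>i i'. i \<in> C \<union> U \<Longrightarrow> i' \<in> C \<union> U \<Longrightarrow>
           distr M borel (\<lambda>\<omega>. (X i \<omega>, Y i \<omega>)) = distr M borel (\<lambda>\<omega>. (X i' \<omega>, Y i' \<omega>))"
    and "\<And>i s. i \<in> C \<union> U \<Longrightarrow> measure M {\<omega> \<in> space M. g (X i \<omega>) = s} = 0"
    and "\<And>i s. i \<in> C \<union> U \<Longrightarrow> measure M {\<omega> \<in> space M. \<bar>Y i \<omega> - muhat (X i \<omega>)\<bar> = s} = 0"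
    and "0 < \<alpha>" and "\<alpha> < 1"
    and "1 \<le> \<kappa>" and "\<kappa> \<le> card U - 1"
    and "j \<in> U" and "k \<in> C"
  shows "AE \<omega> in M.
    real_cond_exp M (gen_sigma M (\<lambda>i \<omega>. (X i \<omega>, Y i \<omega>)) (U - {j}))
      (\<lambda>\<omega>. let T = (\<lambda>i. g (X i \<omega>));
               R = (\<lambda>i. \<bar>Y i \<omega> - muhat (X i \<omega>)\<bar>);
               tstar = kth_smallest \<kappa> (image_mset T (mset_set (U - {j})))
           in delta_jk \<alpha> C j k T R tstar / (real (card (sel_cal C T tstar)) + 1)
              * (if T j \<le> tstar \<and> T k \<le> tstar then 1 else 0)) \<omega> = 0"
proof -
  interpret prob_space M by fact
  define Z where "Z i \<omega> = (X i \<omega>, Y i \<omega>)" for i \<omega>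
  define h where "h x = weighted_delta \<alpha> C U \<kappa> j k (\<lambda>i. g (fst (x i)))
      (\<lambda>i. \<bar>snd (x i) - muhat (fst (x i))\<bar>)" for x :: "nat \<Rightarrow> 'x \<times> real"
  have "AE \<omega> in M. real_cond_exp M (gen_sigma M Z (U - {j})) (\<lambda>\<omega>. h (\<lambda>i\<in>C \<union> U. Z i \<omega>)) \<omega> = 0"
  proof (rule AE_real_cond_exp_eq_0_if_antisymmetric
      [where i\<^sub>0 = k and \<tau> = "Transposition.transpose j k" and c = 1])
    show "Z i \<in> borel_measurable M" if "i \<in> C \<union> U" for i
      unfolding Z_def using assms(8,9)[OF that] by (rule borel_measurable_Pair)
    show "distr M borel (Z i) = distr M borel (Z k)" if "i \<in> C \<union> U" for i
      unfolding Z_def using assms(11)[OF that] assms(19) by blast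
    show "h \<in> borel_measurable (\<Pi>\<^sub>M i\<in>C \<union> U. borel)"
      unfolding h_def using assms(2-6,14-19) by (intro borel_measurable_weighted_delta_residuals)
    show "h (\<lambda>i\<in>C \<union> U. x (Transposition.transpose j k i)) = - h x" for x
      unfolding h_def using assms(4,6,18,19) by (intro weighted_delta_transpose) auto
    show "Transposition.transpose j k i = i" if "i \<in> U - {j}" for i
      using that assms(6,19) by (auto intro!: transpose_apply_other)
    show "indep_vars (\<lambda>_. borel) Z (C \<union> U)"
      using assms(10) unfolding Z_def .
    show "bij_betw (Transposition.transpose j k) (C \<union> U) (C \<union> U)"
      using assms(18,19) by simp
    show "\<bar>h x\<bar> \<le> 1" for x
      unfolding h_def by (rule abs_weighted_delta_le_1)
  qed (use assms(19) in auto)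
  moreover have "h (\<lambda>i\<in>C \<union> U. Z i \<omega>) = weighted_delta \<alpha> C U \<kappa> j k (\<lambda>i. g (X i \<omega>))
      (\<lambda>i. \<bar>Y i \<omega> - muhat (X i \<omega>)\<bar>)" for \<omega>
    unfolding h_def Z_def using assms(18,19) by (intro weighted_delta_cong) auto
  ultimately show ?thesis
    unfolding Z_def weighted_delta_def Let_def by simp
qed

end
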